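(* If $w\in\mathbb{R}^n$, $w\ge0$, is strongly bilevel feasible, then $w$ has exactly one bilevel feasible decomposition.
   Context: Multi-commodity network pricing setting: $G=(\mathcal{V},\mathcal{A})$ directed graph with arc costs $c\ge0$, nonempty tolled arc set $\mathcal{A}_1\subsetneq\mathcal{A}$, $n=|\mathcal{A}_1|$, $N$ node–arc incidence matrix; finite set $\mathcal{K}$ of commodities, commodity $k$ having origin $o^k$ and destination $d^k$ connected by a path of arcs not in $\mathcal{A}_1$; $b^k_{o^k}=1$, $b^k_{d^k}=-1$, other entries $0$; $\mathcal{X}^k=\{x\in\mathbb{R}^{\mathcal{A}}: Nx=b^k,\ x\ge0\}$; $x_{\mathcal{A}_1}$ is the restriction of $x$ to $\mathcal{A}_1$. For $t\in\mathbb{R}^n$ let $f^k(t)=\min\{c^\top x+t^\top x_{\mathcal{A}_1}: x\in\mathcal{X}^k\}$ if $t\ge0$, $-\infty$ otherwise; $f=\sum_k f^k$; $g^k(w)=\sup_t\{f^k(t)-t^\top w\}$, $g(w)=\sup_t\{f(t)-t^\top w\}$. A vector $w\ge0$ is strongly bilevel feasible if $\{w\}$ is the projection onto $w$-space of a face of $\operatorname{epi}(g)$ whose affine hull's direction space does not contain $(0,1)$ (equivalently $\{(w,g(w))\}$ is a face of $\operatorname{epi}(g)$). A decomposition of $w$ is a tuple $(w^k)_{k\in\mathcal{K}}$ of vectors $w^k\ge0$ with $\sum_k w^k=w$; it is bilevel feasible if $g(w)=\sum_k g^k(w^k)$. *)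

theory Defs
  imports "HOL-Analysis.Analysis"
begin

text \<open>Tolled arcs A1 = range tol, where
  tol :: 'n \<Rightarrow> 'e is injective, so R^n is real^'n indexed by the tolled arcs.\<close>

definition netflow :: "('e::finite \<Rightarrow> 'v) \<Rightarrow> ('e \<Rightarrow> 'v) \<Rightarrow> ('e \<Rightarrow> real) \<Rightarrow> 'v \<Rightarrow> real" where
  "netflow tail head x v = (\<Sum>a\<in>{a. tail a = v}. x a) - (\<Sum>a\<in>{a. head a = v}. x a)"

definition demand :: "'v \<Rightarrow> 'v \<Rightarrow> 'v \<Rightarrow> real" where
  "demand o' d v = (if v = o' then 1 else if v = d then -1 else 0)"

definition flows :: "('e::finite \<Rightarrow> 'v) \<Rightarrow> ('e \<Rightarrow> 'v) \<Rightarrow> 'v \<Rightarrow> 'v \<Rightarrow> ('e \<Rightarrow> real) set" where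
  "flows tail head o' d = {x. (\<forall>v. netflow tail head x v = demand o' d v) \<and> (\<forall>a. 0 \<le> x a)}"

definition fk :: "('e::finite \<Rightarrow> 'v) \<Rightarrow> ('e \<Rightarrow> 'v) \<Rightarrow> ('e \<Rightarrow> real) \<Rightarrow> ('n::finite \<Rightarrow> 'e)
    \<Rightarrow> 'v \<Rightarrow> 'v \<Rightarrow> real^'n \<Rightarrow> ereal" where
  "fk tail head c tol o' d t =
     (if (\<forall>i. 0 \<le> t $ i)
      then (INF x\<in>flows tail head o' d. ereal ((\<Sum>a\<in>UNIV. c a * x a) + (\<Sum>i\<in>UNIV. t $ i * x (tol i))))
      else -\<infinity>)"

definition gk :: "('e::finite \<Rightarrow> 'v) \<Rightarrow> ('e \<Rightarrow> 'v) \<Rightarrow> ('e \<Rightarrow> real) \<Rightarrow> ('n::finite \<Rightarrow> 'e)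
    \<Rightarrow> 'v \<Rightarrow> 'v \<Rightarrow> real^'n \<Rightarrow> ereal" where
  "gk tail head c tol o' d w = (SUP t. fk tail head c tol o' d t - ereal (t \<bullet> w))"

definition ftot :: "('e::finite \<Rightarrow> 'v) \<Rightarrow> ('e \<Rightarrow> 'v) \<Rightarrow> ('e \<Rightarrow> real) \<Rightarrow> ('n::finite \<Rightarrow> 'e)
    \<Rightarrow> 'k set \<Rightarrow> ('k \<Rightarrow> 'v) \<Rightarrow> ('k \<Rightarrow> 'v) \<Rightarrow> real^'n \<Rightarrow> ereal" where
  "ftot tail head c tol K orig dest t = (\<Sum>k\<in>K. fk tail head c tol (orig k) (dest k) t)"

definition gtot :: "('e::finite \<Rightarrow> 'v) \<Rightarrow> ('e \<Rightarrow> 'v) \<Rightarrow> ('e \<Rightarrow> real) \<Rightarrow> ('n::finite \<Rightarrow> 'e)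
    \<Rightarrow> 'k set \<Rightarrow> ('k \<Rightarrow> 'v) \<Rightarrow> ('k \<Rightarrow> 'v) \<Rightarrow> real^'n \<Rightarrow> ereal" where
  "gtot tail head c tol K orig dest w = (SUP t. ftot tail head c tol K orig dest t - ereal (t \<bullet> w))"

definition epigraph :: "('a \<Rightarrow> ereal) \<Rightarrow> ('a \<times> real) set" where
  "epigraph h = {(w, \<mu>). h w \<le> ereal \<mu>}"

definition aff_direction :: "('a::real_vector) set \<Rightarrow> 'a set" where
  "aff_direction F = {x - y | x y. x \<in> affine hull F \<and> y \<in> affine hull F}"

definition strongly_bilevel_feasible ::
  "('e::finite \<Rightarrow> 'v) \<Rightarrow> ('e \<Rightarrow> 'v) \<Rightarrow> ('e \<Rightarrow> real) \<Rightarrow> ('n::finite \<Rightarrow> 'e)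
    \<Rightarrow> 'k set \<Rightarrow> ('k \<Rightarrow> 'v) \<Rightarrow> ('k \<Rightarrow> 'v) \<Rightarrow> real^'n \<Rightarrow> bool" where
  "strongly_bilevel_feasible tail head c tol K orig dest w \<longleftrightarrow>
     (\<forall>i. 0 \<le> w $ i) \<and>
     (\<exists>F. F face_of epigraph (gtot tail head c tol K orig dest) \<and> fst ` F = {w} \<and>
          (0, 1) \<notin> aff_direction F)"

definition is_decomposition :: "'k set \<Rightarrow> real^'n \<Rightarrow> ('k \<Rightarrow> real^'n) \<Rightarrow> bool" where
  "is_decomposition K w wk \<longleftrightarrow> (\<forall>k\<in>K. \<forall>i. 0 \<le> wk k $ i) \<and> (\<Sum>k\<in>K. wk k) = w"

definition bilevel_feasible_decomposition ::
  "('e::finite \<Rightarrow> 'v) \<Rightarrow> ('e \<Rightarrow> 'v) \<Rightarrow> ('e \<Rightarrow> real) \<Rightarrow> ('n::finite \<Rightarrow> 'e)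
    \<Rightarrow> 'k set \<Rightarrow> ('k \<Rightarrow> 'v) \<Rightarrow> ('k \<Rightarrow> 'v) \<Rightarrow> real^'n \<Rightarrow> ('k \<Rightarrow> real^'n) \<Rightarrow> bool" where
  "bilevel_feasible_decomposition tail head c tol K orig dest w wk \<longleftrightarrow>
     is_decomposition K w wk \<and>
     gtot tail head c tol K orig dest w = (\<Sum>k\<in>K. gk tail head c tol (orig k) (dest k) (wk k))"

definition tollfree_step :: "('e \<Rightarrow> 'v) \<Rightarrow> ('e \<Rightarrow> 'v) \<Rightarrow> ('n \<Rightarrow> 'e) \<Rightarrow> ('v \<times> 'v) set" where
  "tollfree_step tail head tol = {(tail a, head a) | a. a \<notin> range tol}"

end

theory Submission
  imports Defs
begin

text \<open>The total value function g is the conjugate of f = \<Sum>k f_k, so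
  g(w) \<le> \<Sum>k g_k(w_k) for every decomposition of w, and each g_k is convex. Given two bilevel
  feasible decompositions u and v, average them; replacing the k-th component of the average by
  u_k, resp. v_k, gives two points of epi(g) whose midpoint is (w, g(w)). As this point is
  extreme, the two points coincide, so u_k = v_k.

  Existence is LP duality: a cheapest choice of commodity flows whose tolled-arc loads fit
  into w costs at most g(w), by separating (w, \<gamma>) from the upward closure of the compact
  convex set of (load, cost) pairs. Compactness comes from flows carrying at most one unit
  per arc, which cycle cancelling provides.\<close>

section \<open>Conjugates and epigraphs\<close>

definition conjugate :: "('a::real_inner \<Rightarrow> ereal) \<Rightarrow> 'a \<Rightarrow> ereal" where
  "conjugate f w = (SUP t. f t - ereal (t \<bullet> w))"

lemma conjugate_ge: "f t - ereal (t \<bullet> w) \<le> conjugate f w"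
  unfolding conjugate_def by (rule SUP_upper) simp

lemma conjugate_midpoint_le:
  assumes a: "conjugate f a \<le> ereal r" and b: "conjugate f b \<le> ereal s"
  shows "conjugate f (midpoint a b) \<le> ereal ((r + s) / 2)"
  unfolding conjugate_def
proof (rule SUP_least)
  fix t
  have "f t - ereal (t \<bullet> a) \<le> ereal r" "f t - ereal (t \<bullet> b) \<le> ereal s"
    using conjugate_ge a b order_trans by blast+
  moreover have "t \<bullet> midpoint a b = (t \<bullet> a + t \<bullet> b) / 2"
    by (simp add: midpoint_def inner_add_right)
  ultimately show "f t - ereal (t \<bullet> midpoint a b) \<le> ereal ((r + s) / 2)"
    by (cases "f t") auto
qed

lemma conjugate_sum_le:
  "conjugate (\<lambda>t. \<Sum>k\<in>K. f k t) (\<Sum>k\<in>K. z k) \<le> (\<Sum>k\<in>K. conjugate (f k) (z k))"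
  unfolding conjugate_def [of "\<lambda>t. \<Sum>k\<in>K. f k t"]
proof (rule SUP_least)
  fix t
  have "(\<Sum>k\<in>K. f k t) - ereal (t \<bullet> (\<Sum>k\<in>K. z k))
      = (\<Sum>k\<in>K. f k t) + (\<Sum>k\<in>K. ereal (- (t \<bullet> z k)))"
    by (simp add: minus_ereal_def inner_sum_right sum_negf)
  also have "\<dots> = (\<Sum>k\<in>K. f k t - ereal (t \<bullet> z k))"
    by (simp add: minus_ereal_def sum.distrib)
  also have "\<dots> \<le> (\<Sum>k\<in>K. conjugate (f k) (z k))"
    by (intro sum_mono conjugate_ge)
  finally show "(\<Sum>k\<in>K. f k t) - ereal (t \<bullet> (\<Sum>k\<in>K. z k)) \<le> (\<Sum>k\<in>K. conjugate (f k) (z k))" .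
qed

lemma conjugate_zero: "conjugate (\<lambda>t. 0) w = (if w = 0 then 0 else \<infinity>)"
proof (cases "w = 0")
  case True
  then show ?thesis by (simp add: conjugate_def)
next
  case False
  have "ereal B \<le> conjugate (\<lambda>t. 0) w" for B
  proof -
    let ?t = "- ((\<bar>B\<bar> + 1) / (w \<bullet> w)) *\<^sub>R w"
    have "?t \<bullet> w = - (\<bar>B\<bar> + 1)"
      using False by simp
    then have "ereal B \<le> 0 - ereal (?t \<bullet> w)"
      by simp
    also have "\<dots> \<le> conjugate (\<lambda>t. 0) w"
      by (rule conjugate_ge)
    finally show ?thesis .
  qed
  then show ?thesis
    using False ereal_top by auto
qed

lemma mem_epigraph [simp]: "(x, \<mu>) \<in> epigraph h \<longleftrightarrow> h x \<le> ereal \<mu>"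
  by (simp add: epigraph_def)

lemma extreme_point_of_epigraph_eq:
  assumes ext: "(w, \<mu>) extreme_point_of epigraph h"
  shows "h w = ereal \<mu>"
proof (rule ccontr)
  have "h w \<le> ereal \<mu>"
    using ext by (simp add: extreme_point_of_def)
  moreover assume "h w \<noteq> ereal \<mu>"
  ultimately obtain m where m: "h w < ereal m" "m < \<mu>"
    using ereal_dense2 by (metis ereal_less_eq(3) order_less_le)
  let ?a = "(w, m)" and ?b = "(w, 2 * \<mu> - m)"
  have "?a \<in> epigraph h" "?b \<in> epigraph h"
    using m by (auto simp: order_trans[of _ "ereal m"])
  moreover have "(w, \<mu>) \<in> open_segment ?a ?b"
  proof -
    have "midpoint ?a ?b = (w, \<mu>)"
      by (simp add: midpoint_def scaleR_2 flip: scaleR_right_distrib)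
    then show ?thesis
      using m midpoint_in_open_segment[of ?a ?b] by simp
  qed
  ultimately show False
    using ext by (auto simp: extreme_point_of_def)
qed

lemma singleton_if_vertical_notin_aff_direction:
  fixes F :: "('a::real_vector \<times> real) set"
  assumes fst_F: "fst ` F = {w}" and vertical: "(0, 1) \<notin> aff_direction F"
  shows "\<exists>\<mu>. F = {(w, \<mu>)}"
proof -
  obtain \<mu> where \<mu>: "(w, \<mu>) \<in> F"
    using fst_F by (metis imageE insertI1 prod.collapse)
  have "\<mu>' = \<mu>" if \<mu>': "(w, \<mu>') \<in> F" for \<mu>'
  proof (rule ccontr)
    assume ne: "\<mu>' \<noteq> \<mu>"
    let ?D = "(\<lambda>x. x - (w, \<mu>)) ` (affine hull F)"
    have "subspace ?D"
      by (rule affine_diffs_subspace_subtract) (simp_all add: hull_inc \<mu>)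
    moreover have "(0, \<mu>' - \<mu>) \<in> ?D"
      using \<mu>' by (force intro: hull_inc)
    ultimately have "(1 / (\<mu>' - \<mu>)) *\<^sub>R (0, \<mu>' - \<mu>) \<in> ?D"
      by (rule subspace_scale)
    then have "(0, 1) \<in> ?D"
      using ne by simp
    then have "(0, 1) \<in> aff_direction F"
      using \<mu> unfolding aff_direction_def by (force intro: hull_inc)
    with vertical show False ..
  qed
  then have "p = (w, \<mu>)" if "p \<in> F" for p
    using that fst_F by (metis image_eqI prod.collapse singletonD)
  then show ?thesis
    using \<mu> by blast
qed

lemma midpoint_add_left: "midpoint (a + x) (a + y) = a + midpoint x (y::'a::real_vector)"
  unfolding midpoint_def by (simp add: scaleR_right_distrib algebra_simps flip: scaleR_2)

lemma midpoint_Pair: "midpoint (a, b) (c, d) = (midpoint a c, midpoint b d)"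
  by (simp add: midpoint_def)

lemma sum_fun_upd:
  fixes f :: "'k \<Rightarrow> 'a::ab_group_add"
  assumes "finite K" "k \<in> K"
  shows "(\<Sum>j\<in>K. (f(k := x)) j) = (\<Sum>j\<in>K. f j) - f k + x"
  using assms by (simp add: sum.remove sum.cong[of "K - {k}" _ "f(k := x)" f] algebra_simps)

lemma sum_eq_ereal_obtain_real_terms:
  fixes a :: "'k \<Rightarrow> ereal"
  assumes "finite K" "(\<Sum>k\<in>K. a k) = ereal G" "\<forall>k\<in>K. a k \<noteq> -\<infinity>"
  obtains r where "\<forall>k\<in>K. a k = ereal (r k)" "(\<Sum>k\<in>K. r k) = G"
proof
  have not_inf: "a k \<noteq> \<infinity>" if "k \<in> K" for k
  proof
    assume "a k = \<infinity>"
    then have "(\<Sum>k\<in>K. a k) = \<infinity>"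
      using assms(1) that by (auto simp: sum_Pinfty)
    then show False
      using assms(2) by simp
  qed
  show real: "\<forall>k\<in>K. a k = ereal (real_of_ereal (a k))"
  proof
    fix k
    assume "k \<in> K"
    then show "a k = ereal (real_of_ereal (a k))"
      using not_inf assms(3) by (cases "a k") auto
  qed
  then have "(\<Sum>k\<in>K. a k) = ereal (\<Sum>k\<in>K. real_of_ereal (a k))"
    by (simp flip: sum_ereal cong: sum.cong)
  then show "(\<Sum>k\<in>K. real_of_ereal (a k)) = G"
    using assms(2) by simp
qed

lemma conjugate_sum_fun_upd_le:
  fixes f :: "'k \<Rightarrow> 'a::real_inner \<Rightarrow> ereal"
  assumes K: "finite K" and k0: "k0 \<in> K"
    and m: "\<forall>k\<in>K - {k0}. conjugate (f k) (m k) \<le> ereal (\<rho> k)" and x: "conjugate (f k0) x \<le> ereal \<sigma>"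
  shows "conjugate (\<lambda>t. \<Sum>k\<in>K. f k t) ((\<Sum>k\<in>K. m k) - m k0 + x) \<le> ereal (\<sigma> + (\<Sum>k\<in>K - {k0}. \<rho> k))"
proof -
  have "conjugate (\<lambda>t. \<Sum>k\<in>K. f k t) ((\<Sum>k\<in>K. m k) - m k0 + x)
      = conjugate (\<lambda>t. \<Sum>k\<in>K. f k t) (\<Sum>k\<in>K. (m(k0 := x)) k)"
    by (simp only: sum_fun_upd[OF K k0])
  also have "\<dots> \<le> (\<Sum>k\<in>K. conjugate (f k) ((m(k0 := x)) k))"
    by (rule conjugate_sum_le)
  also have "\<dots> = conjugate (f k0) x + (\<Sum>k\<in>K - {k0}. conjugate (f k) (m k))"
    by (simp add: sum.remove[OF K k0] cong: sum.cong_simp)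
  also have "\<dots> \<le> ereal \<sigma> + ereal (\<Sum>k\<in>K - {k0}. \<rho> k)"
    using m x by (auto intro!: add_mono sum_mono simp flip: sum_ereal)
  finally show ?thesis
    by simp
qed

lemma extreme_point_conjugate_sum_unique_split:
  fixes f :: "'k \<Rightarrow> 'a::real_inner \<Rightarrow> ereal" and K :: "'k set"
  defines "H \<equiv> conjugate (\<lambda>t. \<Sum>k\<in>K. f k t)"
  assumes K: "finite K" and k0: "k0 \<in> K"
    and no_minf: "\<forall>k\<in>K. \<forall>x. conjugate (f k) x \<noteq> -\<infinity>"
    and ext: "(w, \<mu>) extreme_point_of epigraph H"
    and u: "(\<Sum>k\<in>K. u k) = w" "H w = (\<Sum>k\<in>K. conjugate (f k) (u k))"
    and v: "(\<Sum>k\<in>K. v k) = w" "H w = (\<Sum>k\<in>K. conjugate (f k) (v k))"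
  shows "u k0 = v k0"
proof -
  have Hw: "H w = ereal \<mu>"
    using ext by (rule extreme_point_of_epigraph_eq)
  have "(\<Sum>k\<in>K. conjugate (f k) (u k)) = ereal \<mu>"
    using u(2) Hw by simp
  then obtain r where r: "\<forall>k\<in>K. conjugate (f k) (u k) = ereal (r k)" "(\<Sum>k\<in>K. r k) = \<mu>"
    using sum_eq_ereal_obtain_real_terms[OF K] no_minf by blast
  have "(\<Sum>k\<in>K. conjugate (f k) (v k)) = ereal \<mu>"
    using v(2) Hw by simp
  then obtain s where s: "\<forall>k\<in>K. conjugate (f k) (v k) = ereal (s k)" "(\<Sum>k\<in>K. s k) = \<mu>"
    using sum_eq_ereal_obtain_real_terms[OF K] no_minf by blast
  define m where "m k = midpoint (u k) (v k)" for k
  define \<rho> where "\<rho> k = (r k + s k) / 2" for k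
  have m_le: "conjugate (f k) (m k) \<le> ereal (\<rho> k)" if "k \<in> K" for k
    unfolding m_def \<rho>_def using r s that by (intro conjugate_midpoint_le) auto
  have m_sum: "(\<Sum>k\<in>K. m k) = w"
    using u(1) v(1) by (simp add: m_def midpoint_def sum.distrib flip: scaleR_sum_right)
  have \<rho>_sum: "(\<Sum>k\<in>K. \<rho> k) = \<mu>"
    using r(2) s(2) by (simp add: \<rho>_def sum.distrib flip: sum_divide_distrib)
  have rest: "(\<Sum>k\<in>K - {k0}. \<rho> k) = \<mu> - \<rho> k0"
    using \<rho>_sum sum.remove[OF K k0, of \<rho>] by simp
  have epi: "(w - m k0 + x, \<sigma> + \<mu> - \<rho> k0) \<in> epigraph H"
    if "conjugate (f k0) x \<le> ereal \<sigma>" for x \<sigma>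
  proof -
    have "H (w - m k0 + x) \<le> ereal (\<sigma> + (\<Sum>k\<in>K - {k0}. \<rho> k))"
      unfolding H_def m_sum[symmetric] using m_le that by (intro conjugate_sum_fun_upd_le[OF K k0]) auto
    then show ?thesis
      by (simp add: rest algebra_simps)
  qed
  let ?p = "(w - m k0 + u k0, r k0 + \<mu> - \<rho> k0)" and ?q = "(w - m k0 + v k0, s k0 + \<mu> - \<rho> k0)"
  have "midpoint (w - m k0 + u k0) (w - m k0 + v k0) = w"
    unfolding midpoint_add_left m_def by simp
  moreover have "midpoint (r k0 + \<mu> - \<rho> k0) (s k0 + \<mu> - \<rho> k0) = \<mu>"
    by (simp add: midpoint_def \<rho>_def field_simps)
  ultimately have "midpoint ?p ?q = (w, \<mu>)"
    by (simp add: midpoint_Pair)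
  moreover have "?p \<in> epigraph H"
    by (rule epi) (use r(1) k0 in simp)
  moreover have "?q \<in> epigraph H"
    by (rule epi) (use s(1) k0 in simp)
  ultimately have "?p = ?q"
    using ext midpoint_in_open_segment[of ?p ?q] unfolding extreme_point_of_def by metis
  then show ?thesis
    by simp
qed

section \<open>Lagrangian duality on a compact convex set\<close>

lemma sum_sets_insert:
  assumes "finite K" "k \<notin> K"
  shows "{\<Sum>j\<in>insert k K. f j | f. \<forall>j\<in>insert k K. f j \<in> S j}
       = (\<Union>x\<in>S k. \<Union>y\<in>{\<Sum>j\<in>K. f j | f. \<forall>j\<in>K. f j \<in> S j}. {x + y})"
proof (intro set_eqI iffI)
  fix p
  assume "p \<in> {\<Sum>j\<in>insert k K. f j | f. \<forall>j\<in>insert k K. f j \<in> S j}"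
  then obtain f where "p = f k + (\<Sum>j\<in>K. f j)" "\<forall>j\<in>insert k K. f j \<in> S j"
    using assms by auto
  then show "p \<in> (\<Union>x\<in>S k. \<Union>y\<in>{\<Sum>j\<in>K. f j | f. \<forall>j\<in>K. f j \<in> S j}. {x + y})"
    by blast
next
  fix p
  assume "p \<in> (\<Union>x\<in>S k. \<Union>y\<in>{\<Sum>j\<in>K. f j | f. \<forall>j\<in>K. f j \<in> S j}. {x + y})"
  then obtain x f where x: "x \<in> S k" and f: "\<forall>j\<in>K. f j \<in> S j" and p: "p = x + (\<Sum>j\<in>K. f j)"
    by blast
  have "(\<Sum>j\<in>K. (f(k := x)) j) = (\<Sum>j\<in>K. f j)"
    using assms(2) by (intro sum.cong) auto
  then have "p = (\<Sum>j\<in>insert k K. (f(k := x)) j)"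
    using assms p by simp
  moreover have "\<forall>j\<in>insert k K. (f(k := x)) j \<in> S j"
    using x f by simp
  ultimately show "p \<in> {\<Sum>j\<in>insert k K. f j | f. \<forall>j\<in>insert k K. f j \<in> S j}"
    by blast
qed

lemma compact_sum_sets:
  fixes S :: "'k \<Rightarrow> 'a::real_normed_vector set"
  assumes "finite K" "\<forall>k\<in>K. compact (S k)"
  shows "compact {\<Sum>k\<in>K. f k | f. \<forall>k\<in>K. f k \<in> S k}"
  using assms
proof (induction K rule: finite_induct)
  case empty
  then show ?case by simp
next
  case (insert k K)
  then show ?case
    unfolding sum_sets_insert[OF insert.hyps] by (intro compact_sums') auto
qed

lemma convex_sum_sets:
  fixes S :: "'k \<Rightarrow> 'a::real_vector set"
  assumes "finite K" "\<forall>k\<in>K. convex (S k)"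
  shows "convex {\<Sum>k\<in>K. f k | f. \<forall>k\<in>K. f k \<in> S k}"
  using assms
proof (induction K rule: finite_induct)
  case empty
  then show ?case by simp
next
  case (insert k K)
  then show ?case
    unfolding sum_sets_insert[OF insert.hyps] by (intro convex_sums) auto
qed

lemma sum_sets_image:
  "{\<Sum>k\<in>K. g (y k) | y. \<forall>k\<in>K. y k \<in> A k} = {\<Sum>k\<in>K. f k | f. \<forall>k\<in>K. f k \<in> g ` A k}"
proof (intro set_eqI iffI)
  fix p
  assume "p \<in> {\<Sum>k\<in>K. f k | f. \<forall>k\<in>K. f k \<in> g ` A k}"
  then obtain f where p: "p = (\<Sum>k\<in>K. f k)" and f: "\<forall>k\<in>K. \<exists>x\<in>A k. f k = g x"
    by blast
  obtain y where "\<forall>k\<in>K. y k \<in> A k \<and> f k = g (y k)"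
    using bchoice[OF f[unfolded Bex_def]] by blast
  then have "p = (\<Sum>k\<in>K. g (y k))" "\<forall>k\<in>K. y k \<in> A k"
    unfolding p by (auto intro: sum.cong)
  then show "p \<in> {\<Sum>k\<in>K. g (y k) | y. \<forall>k\<in>K. y k \<in> A k}"
    by blast
qed blast

lemma nonneg_if_ray_above:
  fixes b a c :: real
  assumes "\<forall>l\<ge>0. b < a + l * c"
  shows "0 \<le> c"
proof (rule ccontr)
  assume "\<not> 0 \<le> c"
  then have "((\<bar>a - b\<bar> + 1) / - c) * c = - (\<bar>a - b\<bar> + 1)"
    by (simp add: field_simps)
  then have "a + ((\<bar>a - b\<bar> + 1) / - c) * c < b"
    by linarith
  moreover have "(\<bar>a - b\<bar> + 1) / - c \<ge> 0"
    using \<open>\<not> 0 \<le> c\<close> by (intro divide_nonneg_pos) auto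
  ultimately show False
    using assms by (meson less_asym)
qed

lemma separating_hyperplane_upward_closure:
  fixes P :: "((real^'n) \<times> real) set"
  assumes "compact P" "convex P" and outside: "\<forall>p\<in>P. \<not> (fst p \<le> w \<and> snd p \<le> \<gamma>)"
  obtains t \<tau> b where "t \<bullet> w + \<tau> * \<gamma> < b"
    and "\<And>p x y. p \<in> P \<Longrightarrow> 0 \<le> x \<Longrightarrow> 0 \<le> y \<Longrightarrow> b < t \<bullet> (fst p + x) + \<tau> * (snd p + y)"
proof -
  define U where "U = (\<Union>x\<in>{0..} \<times> {0..}. \<Union>p\<in>P. {x + p})"
  have "closed U"
    unfolding U_def by (intro closed_compact_sums closed_Times) (auto simp: assms)
  moreover have "convex ({0..} \<times> {0..} :: ((real^'n) \<times> real) set)"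
    by (intro convex_Times) (auto simp: convex_def less_eq_vec_def)
  then have "convex U"
    unfolding U_def using assms(2) by (rule convex_sums)
  moreover have "(w, \<gamma>) \<notin> U"
  proof
    assume "(w, \<gamma>) \<in> U"
    then obtain x p where "x \<in> {0..} \<times> {0..}" "p \<in> P" "(w, \<gamma>) = x + p"
      unfolding U_def by blast
    then show False
      using outside by (auto simp: prod_eq_iff)
  qed
  ultimately obtain a b where a_w: "a \<bullet> (w, \<gamma>) < b" and a_U: "\<forall>x\<in>U. b < a \<bullet> x"
    using separating_hyperplane_closed_point by blast
  show thesis
  proof (rule that[of "fst a" "snd a" b])
    show "fst a \<bullet> w + snd a * \<gamma> < b"
      using a_w by (cases a) (simp add: inner_Pair)
    fix p and x :: "real^'n" and y :: real
    assume "p \<in> P" "0 \<le> x" "0 \<le> y"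
    then have "(x, y) + p \<in> U"
      unfolding U_def by blast
    then have "b < a \<bullet> ((x, y) + p)"
      using a_U by blast
    then show "b < fst a \<bullet> (fst p + x) + snd a * (snd p + y)"
      by (cases a, cases p) (simp add: inner_Pair algebra_simps)
  qed
qed

lemma upward_separation_normal_nonneg:
  fixes t :: "real^'n"
  assumes p: "p \<in> P"
    and above: "\<And>p x y. p \<in> P \<Longrightarrow> 0 \<le> x \<Longrightarrow> 0 \<le> y \<Longrightarrow> b < t \<bullet> (fst p + x) + \<tau> * (snd p + y)"
  shows "0 \<le> t" and "0 \<le> \<tau>"
proof -
  have "0 \<le> t $ i" for i
  proof (rule nonneg_if_ray_above[of b "t \<bullet> fst p + \<tau> * snd p"], intro allI impI)
    fix l :: real
    assume "0 \<le> l"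
    then have "0 \<le> l *\<^sub>R axis i (1::real)"
      by (simp add: less_eq_vec_def axis_def)
    then have "b < t \<bullet> (fst p + l *\<^sub>R axis i 1) + \<tau> * (snd p + 0)"
      using above[OF p] by blast
    then show "b < t \<bullet> fst p + \<tau> * snd p + l * t $ i"
      by (simp add: inner_add_right inner_axis)
  qed
  then show "0 \<le> t"
    by (simp add: less_eq_vec_def)
  show "0 \<le> \<tau>"
  proof (rule nonneg_if_ray_above[of b "t \<bullet> fst p + \<tau> * snd p"], intro allI impI)
    fix l :: real
    assume "0 \<le> l"
    then have "b < t \<bullet> (fst p + 0) + \<tau> * (snd p + l)"
      using above[OF p, of 0 l] by simp
    then show "b < t \<bullet> fst p + \<tau> * snd p + l * \<tau>"
      by (simp add: algebra_simps)
  qed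
qed

lemma compact_convex_lagrange_duality:
  fixes P :: "((real^'n) \<times> real) set"
  assumes "compact P" "convex P"
    and ps: "ps \<in> P" "fst ps \<le> w"
    and ps_min: "\<forall>p\<in>P. fst p \<le> w \<longrightarrow> snd ps \<le> snd p"
    and "\<gamma> < snd ps"
  shows "\<exists>t\<ge>0. \<forall>p\<in>P. t \<bullet> w + \<gamma> < t \<bullet> fst p + snd p"
proof -
  have "\<forall>p\<in>P. \<not> (fst p \<le> w \<and> snd p \<le> \<gamma>)"
    using ps_min \<open>\<gamma> < snd ps\<close> by force
  then obtain t' \<tau> b where below: "t' \<bullet> w + \<tau> * \<gamma> < b"
    and above: "\<And>p x y. p \<in> P \<Longrightarrow> 0 \<le> x \<Longrightarrow> 0 \<le> y \<Longrightarrow> b < t' \<bullet> (fst p + x) + \<tau> * (snd p + y)"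
    using separating_hyperplane_upward_closure[OF assms(1,2)] by blast
  have t'_nonneg: "0 \<le> t'" and "0 \<le> \<tau>"
    using upward_separation_normal_nonneg[OF ps(1) above] by blast+
  moreover have "\<tau> \<noteq> 0"
  proof
    assume "\<tau> = 0"
    moreover have "b < t' \<bullet> (fst ps + (w - fst ps)) + \<tau> * (snd ps + 0)"
      using above[OF ps(1), of "w - fst ps" 0] ps(2) by simp
    ultimately show False
      using below by simp
  qed
  ultimately have \<tau>_pos: "0 < \<tau>"
    by simp
  show ?thesis
  proof (intro exI conjI ballI)
    show "0 \<le> (1 / \<tau>) *\<^sub>R t'"
      using t'_nonneg \<tau>_pos by (intro scaleR_nonneg_nonneg) auto
    fix p
    assume "p \<in> P"
    have "\<tau> * ((1 / \<tau>) *\<^sub>R t' \<bullet> w + \<gamma>) < b"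
      using below \<tau>_pos by (simp add: algebra_simps)
    also have "b < \<tau> * ((1 / \<tau>) *\<^sub>R t' \<bullet> fst p + snd p)"
      using above[OF \<open>p \<in> P\<close>, of 0 0] \<tau>_pos by (simp add: algebra_simps)
    finally show "(1 / \<tau>) *\<^sub>R t' \<bullet> w + \<gamma> < (1 / \<tau>) *\<^sub>R t' \<bullet> fst p + snd p"
      using \<tau>_pos by simp
  qed
qed

section \<open>Flows\<close>

lemma netflow_lincomb:
  fixes tail head :: "'e::finite \<Rightarrow> 'v"
  shows "netflow tail head (\<lambda>a. p * x a + q * y a) v
       = p * netflow tail head x v + q * netflow tail head y v"
  unfolding netflow_def by (simp add: sum.distrib sum_distrib_left algebra_simps)

lemma netflow_indicator:
  fixes tail head :: "'e::finite \<Rightarrow> 'v"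
  shows "netflow tail head (\<lambda>a. if a = b then 1 else 0) v
       = (if tail b = v then 1 else 0) - (if head b = v then 1 else 0)"
  unfolding netflow_def by (simp add: sum.delta')

lemma netflow_eq_sum:
  fixes tail head :: "'e::finite \<Rightarrow> 'v"
  shows "netflow tail head y v
       = (\<Sum>b\<in>UNIV. y b * ((if tail b = v then 1 else 0) - (if head b = v then 1 else 0)))"
proof -
  have "(\<Sum>b\<in>UNIV. y b * (if P b then 1 else 0)) = sum y {b. P b}" for P :: "'e \<Rightarrow> bool"
    by (simp add: sum.If_cases if_distrib[of "\<lambda>x. _ * x"] cong: if_cong)
  then show ?thesis
    unfolding netflow_def right_diff_distrib sum_subtractf by simp
qed

lemma demand_eq: "o' \<noteq> d \<Longrightarrow> demand o' d v = (if v = o' then 1 else 0) - (if v = d then 1 else 0)"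
  unfolding demand_def by auto

lemma unit_flow_of_rtrancl:
  fixes tail head :: "'e::finite \<Rightarrow> 'v"
  assumes "(u, v) \<in> {(tail a, head a) | a. a \<in> A}\<^sup>*"
  shows "\<exists>z. (\<forall>a. 0 \<le> z a) \<and> (\<forall>a. a \<notin> A \<longrightarrow> z a = 0) \<and>
     (\<forall>x. netflow tail head z x = (if x = u then 1 else 0) - (if x = v then 1 else 0))"
  using assms
proof (induction rule: rtrancl_induct)
  case base
  show ?case
    by (rule exI[of _ "\<lambda>a. 0"]) (simp add: netflow_def)
next
  case (step y v)
  then obtain z where z: "\<forall>a. 0 \<le> z a" "\<forall>a. a \<notin> A \<longrightarrow> z a = 0"
     "\<forall>x. netflow tail head z x = (if x = u then 1 else 0) - (if x = y then 1 else 0)"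
    by blast
  from step(2) obtain b where b: "y = tail b" "v = head b" "b \<in> A"
    by blast
  let ?z = "\<lambda>a. 1 * z a + 1 * (if a = b then 1 else 0)"
  have "netflow tail head ?z x = (if x = u then 1 else 0) - (if x = v then 1 else 0)" for x
    unfolding netflow_lincomb netflow_indicator using z(3) b by auto
  moreover have "\<forall>a. 0 \<le> ?z a" "\<forall>a. a \<notin> A \<longrightarrow> ?z a = 0"
    using z b by auto
  ultimately show ?case
    by (intro exI[of _ ?z]) simp
qed

text \<open>Cut argument: no arc of the support leaves the set R of nodes reachable from the head
  of a through the support, while a enters R with more than one unit. So the net outflow of R
  is below -1, which the demands forbid.\<close>
lemma heavy_arc_on_cycle:
  fixes tail head :: "'e::finite \<Rightarrow> 'v::finite"
  assumes y: "y \<in> flows tail head o' d" and od: "o' \<noteq> d" and heavy: "1 < y a"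
  shows "(head a, tail a) \<in> {(tail b, head b) | b. b \<in> {b. 0 < y b}}\<^sup>*"
proof (rule ccontr)
  let ?S = "{(tail b, head b) | b. b \<in> {b. 0 < y b}}"
  define R where "R = {v. (head a, v) \<in> ?S\<^sup>*}"
  assume "(head a, tail a) \<notin> ?S\<^sup>*"
  then have "tail a \<notin> R" "head a \<in> R"
    unfolding R_def by auto
  have closed: "head b \<in> R" if "tail b \<in> R" "0 < y b" for b
  proof -
    have "(tail b, head b) \<in> ?S"
      using that by blast
    then show ?thesis
      using that(1) unfolding R_def by (auto intro: rtrancl_into_rtrancl)
  qed
  define T where "T b = y b * ((if tail b \<in> R then 1 else 0) - (if head b \<in> R then 1 else 0))" for b
  have "(\<Sum>v\<in>R. netflow tail head y v) = (\<Sum>b\<in>UNIV. \<Sum>v\<in>R. y b * ((if tail b = v then 1 else 0) - (if head b = v then 1 else 0)))"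
    unfolding netflow_eq_sum by (rule sum.swap)
  also have "\<dots> = (\<Sum>b\<in>UNIV. T b)"
    unfolding T_def by (simp add: sum_distrib_left[symmetric] sum_subtractf)
  also have "\<dots> = T a + (\<Sum>b\<in>UNIV - {a}. T b)"
    by (simp add: sum.remove)
  also have "\<dots> \<le> T a"
  proof -
    have "0 \<le> y b" for b
      using y unfolding flows_def by blast
    then have "T b \<le> 0" for b
      using closed[of b] unfolding T_def
      by (cases "0 < y b"; cases "tail b \<in> R"; cases "head b \<in> R") (auto simp: not_less)
    then show ?thesis
      by (simp add: sum_nonpos)
  qed
  also have "T a < -1"
    unfolding T_def using \<open>tail a \<notin> R\<close> \<open>head a \<in> R\<close> heavy by simp
  finally have "(\<Sum>v\<in>R. netflow tail head y v) < -1" .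
  moreover have "(\<Sum>v\<in>R. netflow tail head y v) = (\<Sum>v\<in>R. demand o' d v)"
    using y unfolding flows_def by simp
  moreover have "(\<Sum>v\<in>R. demand o' d v) \<ge> -1"
    using od by (simp add: demand_eq sum_subtractf)
  ultimately show False
    by simp
qed

lemma circulation_through_heavy_arc:
  fixes tail head :: "'e::finite \<Rightarrow> 'v::finite"
  assumes y: "y \<in> flows tail head o' d" and od: "o' \<noteq> d" and heavy: "1 < y a"
  shows "\<exists>z. (\<forall>b. 0 \<le> z b) \<and> (\<forall>v. netflow tail head z v = 0) \<and> 1 \<le> z a \<and>
             (\<forall>b. 0 < z b \<longrightarrow> 0 < y b)"
proof -
  obtain p where p: "\<forall>b. 0 \<le> p b" "\<forall>b. b \<notin> {b. 0 < y b} \<longrightarrow> p b = 0"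
    "\<forall>v. netflow tail head p v = (if v = head a then 1 else 0) - (if v = tail a then 1 else 0)"
    using unit_flow_of_rtrancl[OF heavy_arc_on_cycle[OF y od heavy]] by blast
  let ?z = "\<lambda>b. 1 * p b + 1 * (if b = a then 1 else 0)"
  have "netflow tail head ?z v = 0" for v
    unfolding netflow_lincomb netflow_indicator using p(3) by simp
  moreover have "0 < y b" if "0 < ?z b" for b
    using that p(2) heavy by (cases "b = a") auto
  ultimately show ?thesis
    using p(1) by (intro exI[of _ ?z]) simp
qed

lemma flow_cancel_heavy_arc:
  fixes tail head :: "'e::finite \<Rightarrow> 'v::finite"
  assumes y: "y \<in> flows tail head o' d" and od: "o' \<noteq> d" and heavy: "1 < y a"
  shows "\<exists>y'\<in>flows tail head o' d. (\<forall>b. y' b \<le> y b) \<and> (\<Sum>b\<in>UNIV. y' b) < (\<Sum>b\<in>UNIV. y b)"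
proof -
  obtain z where z_nonneg: "\<forall>b. 0 \<le> z b" and z_circ: "\<forall>v. netflow tail head z v = 0"
    and z_a: "1 \<le> z a" and z_supp: "\<forall>b. 0 < z b \<longrightarrow> 0 < y b"
    using circulation_through_heavy_arc[OF y od heavy] by blast
  have y_nonneg: "\<forall>b. 0 \<le> y b"
    using y unfolding flows_def by blast
  define P where "P = {b. 0 < z b}"
  define \<epsilon> where "\<epsilon> = Min ((\<lambda>b. y b / z b) ` P)"
  have "a \<in> P"
    using z_a unfolding P_def by simp
  then have \<epsilon>_pos: "0 < \<epsilon>"
    unfolding \<epsilon>_def P_def using z_supp by (subst Min_gr_iff) auto
  have \<epsilon>_le: "\<epsilon> * z b \<le> y b" for b
  proof (cases "b \<in> P")
    case True
    then have "\<epsilon> \<le> y b / z b"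
      unfolding \<epsilon>_def by (intro Min_le) auto
    then show ?thesis
      using True unfolding P_def by (simp add: pos_le_divide_eq)
  next
    case False
    then have "z b = 0"
      using z_nonneg unfolding P_def by (simp add: order.antisym)
    then show ?thesis
      using y_nonneg by simp
  qed
  let ?y' = "\<lambda>b. 1 * y b + (- \<epsilon>) * z b"
  show ?thesis
  proof (intro bexI[of _ ?y'] conjI)
    have "netflow tail head ?y' v = netflow tail head y v" for v
      unfolding netflow_lincomb using z_circ by simp
    then show "?y' \<in> flows tail head o' d"
      using y \<epsilon>_le unfolding flows_def by simp
    show "\<forall>b. ?y' b \<le> y b"
      using \<epsilon>_pos z_nonneg by simp
    have "z a \<le> (\<Sum>b\<in>UNIV. z b)"
      using z_nonneg by (intro member_le_sum) auto
    then have "0 < \<epsilon> * (\<Sum>b\<in>UNIV. z b)"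
      using \<epsilon>_pos z_a by simp
    then show "(\<Sum>b\<in>UNIV. ?y' b) < (\<Sum>b\<in>UNIV. y b)"
      by (simp add: sum_subtractf sum_distrib_left)
  qed
qed

definition flow_vecs :: "('e::finite \<Rightarrow> 'v) \<Rightarrow> ('e \<Rightarrow> 'v) \<Rightarrow> 'v \<Rightarrow> 'v \<Rightarrow> (real^'e) set" where
  "flow_vecs tail head o' d = {v. vec_nth v \<in> flows tail head o' d}"

definition bounded_flows :: "('e::finite \<Rightarrow> 'v) \<Rightarrow> ('e \<Rightarrow> 'v) \<Rightarrow> 'v \<Rightarrow> 'v \<Rightarrow> (real^'e) set" where
  "bounded_flows tail head o' d = flow_vecs tail head o' d \<inter> cbox 0 1"

lemma closed_flow_vecs:
  fixes tail head :: "'e::finite \<Rightarrow> 'v"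
  shows "closed (flow_vecs tail head o' d)"
proof -
  have "flow_vecs tail head o' d
      = (\<Inter>v. {x. netflow tail head (vec_nth x) v = demand o' d v}) \<inter> (\<Inter>a. {x. 0 \<le> x $ a})"
    unfolding flow_vecs_def flows_def by auto
  moreover have "closed {x. netflow tail head (vec_nth x) v = demand o' d v}" for v
    unfolding netflow_def by (intro closed_Collect_eq continuous_intros)
  moreover have "closed {x::real^'e. 0 \<le> x $ a}" for a
    by (intro closed_Collect_le continuous_intros)
  ultimately show ?thesis
    by (auto intro!: closed_Int closed_INT)
qed

lemma convex_flow_vecs:
  fixes tail head :: "'e::finite \<Rightarrow> 'v"
  shows "convex (flow_vecs tail head o' d)"
  unfolding convex_def flow_vecs_def flows_def
proof (intro ballI allI impI, elim CollectE conjE, intro CollectI conjI allI)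
  fix x y :: "real^'e" and u v :: real and n a
  assume "u + v = 1" "0 \<le> u" "0 \<le> v" "\<forall>n. netflow tail head (vec_nth x) n = demand o' d n"
    "\<forall>a. 0 \<le> x $ a" "\<forall>n. netflow tail head (vec_nth y) n = demand o' d n" "\<forall>a. 0 \<le> y $ a"
  moreover have "vec_nth (u *\<^sub>R x + v *\<^sub>R y) = (\<lambda>a. u * x $ a + v * y $ a)"
    by auto
  ultimately show "netflow tail head (vec_nth (u *\<^sub>R x + v *\<^sub>R y)) n = demand o' d n"
    and "0 \<le> (u *\<^sub>R x + v *\<^sub>R y) $ a"
    by (simp_all add: netflow_lincomb flip: distrib_right)
qed

lemma compact_bounded_flows:
  fixes tail head :: "'e::finite \<Rightarrow> 'v"
  shows "compact (bounded_flows tail head o' d)"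
  unfolding bounded_flows_def using closed_flow_vecs by (rule closed_Int_compact) simp

lemma convex_bounded_flows:
  fixes tail head :: "'e::finite \<Rightarrow> 'v"
  shows "convex (bounded_flows tail head o' d)"
  unfolding bounded_flows_def by (intro convex_Int convex_flow_vecs convex_box)

lemma bounded_flows_iff:
  fixes tail head :: "'e::finite \<Rightarrow> 'v"
  shows "x \<in> bounded_flows tail head o' d \<longleftrightarrow> vec_nth x \<in> flows tail head o' d \<and> (\<forall>a. x $ a \<le> 1)"
  unfolding bounded_flows_def flow_vecs_def flows_def by (auto simp: mem_box_cart)

text \<open>A flow of least total volume below a given flow carries at most one unit on every arc,
  since otherwise a cycle could be cancelled.\<close>
lemma bounded_flow_below:
  fixes tail head :: "'e::finite \<Rightarrow> 'v::finite"
  assumes x: "x \<in> flows tail head o' d" and od: "o' \<noteq> d"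
  shows "\<exists>y\<in>bounded_flows tail head o' d. \<forall>a. y $ a \<le> x a"
proof -
  define D where "D = flow_vecs tail head o' d \<inter> cbox 0 (vec_lambda x)"
  have vec_nth_lambda: "vec_nth (vec_lambda f) = f" for f :: "'e \<Rightarrow> real"
    by (rule ext) simp
  have "compact D"
    unfolding D_def using closed_flow_vecs by (rule closed_Int_compact) simp
  moreover have "vec_lambda x \<in> D"
    using x unfolding D_def flow_vecs_def flows_def by (simp add: mem_box_cart vec_nth_lambda)
  ultimately obtain y where y: "y \<in> D" and y_min: "\<forall>z\<in>D. (\<Sum>a\<in>UNIV. y $ a) \<le> (\<Sum>a\<in>UNIV. z $ a)"
  proof -
    have "continuous_on D (\<lambda>v. \<Sum>a\<in>UNIV. v $ a)"
      by (intro continuous_intros)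
    then show thesis
      using continuous_attains_inf[OF \<open>compact D\<close>] \<open>vec_lambda x \<in> D\<close> that by blast
  qed
  have y_flow: "vec_nth y \<in> flows tail head o' d" and y_x: "\<forall>a. y $ a \<le> x a"
    using y unfolding D_def flow_vecs_def by (auto simp: mem_box_cart)
  have "y $ a \<le> 1" for a
  proof (rule ccontr)
    assume "\<not> y $ a \<le> 1"
    then have "1 < y $ a"
      by simp
    then obtain y' where y': "y' \<in> flows tail head o' d" "\<forall>b. y' b \<le> y $ b"
      "(\<Sum>b\<in>UNIV. y' b) < (\<Sum>b\<in>UNIV. y $ b)"
      using flow_cancel_heavy_arc[OF y_flow od \<open>1 < y $ a\<close>] by blast
    have "y' b \<le> x b" for b
      using y'(2) y_x by (metis order_trans)
    then have "vec_lambda y' \<in> D"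
      using y'(1) unfolding D_def flow_vecs_def flows_def by (auto simp: mem_box_cart vec_nth_lambda)
    then have "(\<Sum>b\<in>UNIV. y $ b) \<le> (\<Sum>b\<in>UNIV. y' b)"
      using y_min by fastforce
    with y'(3) show False
      by simp
  qed
  then have "y \<in> bounded_flows tail head o' d"
    using y_flow by (simp add: bounded_flows_iff)
  with y_x show ?thesis
    by blast
qed

section \<open>A single commodity\<close>

definition cost :: "('e::finite \<Rightarrow> real) \<Rightarrow> ('n::finite \<Rightarrow> 'e) \<Rightarrow> real^'n \<Rightarrow> ('e \<Rightarrow> real) \<Rightarrow> real" where
  "cost c tol t x = (\<Sum>a\<in>UNIV. c a * x a) + (\<Sum>i\<in>UNIV. t $ i * x (tol i))"

lemma fk_eq_INF:
  "0 \<le> t \<Longrightarrow> fk tail head c tol o' d t = (INF x\<in>flows tail head o' d. ereal (cost c tol t x))"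
  unfolding fk_def cost_def by (simp add: less_eq_vec_def)

lemma fk_eq_minf: "\<not> 0 \<le> t \<Longrightarrow> fk tail head c tol o' d t = -\<infinity>"
  unfolding fk_def by (auto simp: less_eq_vec_def)

lemma gk_eq_conjugate: "gk tail head c tol o' d = conjugate (fk tail head c tol o' d)"
  unfolding gk_def conjugate_def by (rule ext) (rule refl)

lemma gtot_eq_conjugate:
  "gtot tail head c tol K orig dest = conjugate (\<lambda>t. \<Sum>k\<in>K. fk tail head c tol (orig k) (dest k) t)"
  unfolding gtot_def ftot_def conjugate_def by (rule ext) (rule refl)

locale single_commodity =
  fixes tail head :: "'e::finite \<Rightarrow> 'v::finite" and c :: "'e \<Rightarrow> real" and tol :: "'n::finite \<Rightarrow> 'e"
    and o' d :: 'v
  assumes c_nonneg: "\<forall>a. 0 \<le> c a"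
    and od_distinct: "o' \<noteq> d"
    and tollfree_path: "(o', d) \<in> (tollfree_step tail head tol)\<^sup>*"
begin

lemma cost_mono:
  assumes "0 \<le> t" "\<forall>a. x a \<le> y a"
  shows "cost c tol t x \<le> cost c tol t y"
  unfolding cost_def using assms c_nonneg
  by (intro add_mono sum_mono mult_left_mono) (auto simp: less_eq_vec_def)

lemma tollfree_bounded_flow: "\<exists>y\<in>bounded_flows tail head o' d. \<forall>i. y $ tol i = 0"
proof -
  have "tollfree_step tail head tol = {(tail a, head a) | a. a \<in> - range tol}"
    unfolding tollfree_step_def by auto
  then have "(o', d) \<in> {(tail a, head a) | a. a \<in> - range tol}\<^sup>*"
    using tollfree_path by simp
  then obtain z where z: "\<forall>a. 0 \<le> z a" "\<forall>a. a \<notin> - range tol \<longrightarrow> z a = 0"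
     "\<forall>v. netflow tail head z v = (if v = o' then 1 else 0) - (if v = d then 1 else 0)"
    by (blast dest: unit_flow_of_rtrancl)
  have "z \<in> flows tail head o' d"
    unfolding flows_def using z(1,3) od_distinct by (simp add: demand_eq)
  then obtain y where y: "y \<in> bounded_flows tail head o' d" "\<forall>a. y $ a \<le> z a"
    by (blast dest: bounded_flow_below[OF _ od_distinct])
  have "y $ tol i = 0" for i
  proof -
    have "0 \<le> y $ tol i"
      using y(1) by (simp add: bounded_flows_iff flows_def)
    moreover have "z (tol i) = 0"
      using z(2) by simp
    ultimately show ?thesis
      using y(2)[rule_format, of "tol i"] by linarith
  qed
  with y(1) show ?thesis
    by blast
qed

lemma fk_attained:
  assumes t: "0 \<le> t"
  shows "\<exists>y\<in>bounded_flows tail head o' d. fk tail head c tol o' d t = ereal (cost c tol t (vec_nth y))"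
proof -
  have ne: "bounded_flows tail head o' d \<noteq> {}"
    using tollfree_bounded_flow by blast
  have cont: "continuous_on (bounded_flows tail head o' d) (\<lambda>y. cost c tol t (vec_nth y))"
    unfolding cost_def by (intro continuous_intros)
  obtain y where y: "y \<in> bounded_flows tail head o' d"
    and y_min: "\<forall>z\<in>bounded_flows tail head o' d. cost c tol t (vec_nth y) \<le> cost c tol t (vec_nth z)"
    using continuous_attains_inf[OF compact_bounded_flows ne cont] by blast
  have y_flow: "vec_nth y \<in> flows tail head o' d"
    using y by (simp add: bounded_flows_iff)
  have "(INF x\<in>flows tail head o' d. ereal (cost c tol t x)) = ereal (cost c tol t (vec_nth y))"
  proof (rule antisym)
    show "(INF x\<in>flows tail head o' d. ereal (cost c tol t x)) \<le> ereal (cost c tol t (vec_nth y))"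
      using y_flow by (rule INF_lower)
    show "ereal (cost c tol t (vec_nth y)) \<le> (INF x\<in>flows tail head o' d. ereal (cost c tol t x))"
    proof (rule INF_greatest)
      fix x
      assume x: "x \<in> flows tail head o' d"
      obtain v where v: "v \<in> bounded_flows tail head o' d" "\<forall>a. v $ a \<le> x a"
        using bounded_flow_below[OF x od_distinct] by blast
      have "cost c tol t (vec_nth y) \<le> cost c tol t (vec_nth v)"
        using y_min v(1) by blast
      also have "\<dots> \<le> cost c tol t x"
        using cost_mono[OF t] v(2) by simp
      finally show "ereal (cost c tol t (vec_nth y)) \<le> ereal (cost c tol t x)"
        by simp
    qed
  qed
  with y show ?thesis
    unfolding fk_eq_INF[OF t] by blast
qed

lemma gk_nonneg: "0 \<le> gk tail head c tol o' d w"
proof -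
  obtain y where y: "y \<in> bounded_flows tail head o' d"
    and fk0: "fk tail head c tol o' d 0 = ereal (cost c tol 0 (vec_nth y))"
    using fk_attained[OF order_refl] by blast
  have "0 \<le> cost c tol 0 (vec_nth y)"
    using y c_nonneg unfolding cost_def bounded_flows_iff flows_def
    by (auto intro!: sum_nonneg)
  then have "0 \<le> fk tail head c tol o' d 0 - ereal (0 \<bullet> w)"
    using fk0 by simp
  also have "\<dots> \<le> gk tail head c tol o' d w"
    unfolding gk_eq_conjugate by (rule conjugate_ge)
  finally show ?thesis .
qed

lemma gk_le_cost:
  assumes y: "y \<in> flows tail head o' d" and y_w: "\<forall>i. y (tol i) \<le> w $ i"
  shows "gk tail head c tol o' d w \<le> ereal (\<Sum>a\<in>UNIV. c a * y a)"
  unfolding gk_def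
proof (rule SUP_least)
  fix t :: "real^'n"
  show "fk tail head c tol o' d t - ereal (t \<bullet> w) \<le> ereal (\<Sum>a\<in>UNIV. c a * y a)"
  proof (cases "0 \<le> t")
    case True
    have "(\<Sum>i\<in>UNIV. t $ i * y (tol i)) \<le> t \<bullet> w"
      unfolding inner_vec_def inner_real_def using True y_w
      by (intro sum_mono mult_left_mono) (auto simp: less_eq_vec_def)
    then have "cost c tol t y \<le> (\<Sum>a\<in>UNIV. c a * y a) + t \<bullet> w"
      unfolding cost_def by simp
    moreover have "fk tail head c tol o' d t \<le> ereal (cost c tol t y)"
      unfolding fk_eq_INF[OF True] using y by (rule INF_lower)
    ultimately have "fk tail head c tol o' d t \<le> ereal ((\<Sum>a\<in>UNIV. c a * y a) + t \<bullet> w)"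
      using order_trans ereal_less_eq(3) by blast
    then show ?thesis
      by (cases "fk tail head c tol o' d t") auto
  next
    case False
    then show ?thesis
      by (simp add: fk_eq_minf)
  qed
qed

end

section \<open>Several commodities\<close>

definition load_cost :: "('e::finite \<Rightarrow> real) \<Rightarrow> ('n::finite \<Rightarrow> 'e) \<Rightarrow> real^'e \<Rightarrow> (real^'n) \<times> real" where
  "load_cost c tol y = ((\<chi> i. y $ tol i), (\<Sum>a\<in>UNIV. c a * y $ a))"

lemma linear_load_cost: "linear (load_cost c tol)"
  by (rule linearI) (simp_all add: load_cost_def vec_eq_iff sum.distrib sum_distrib_left algebra_simps)

lemma cost_eq_load_cost: "cost c tol t (vec_nth y) = t \<bullet> fst (load_cost c tol y) + snd (load_cost c tol y)"
  unfolding cost_def load_cost_def inner_vec_def by (simp add: add.commute)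

locale multi_commodity =
  fixes tail head :: "'e::finite \<Rightarrow> 'v::finite" and c :: "'e \<Rightarrow> real" and tol :: "'n::finite \<Rightarrow> 'e"
    and K :: "'k set" and orig dest :: "'k \<Rightarrow> 'v"
  assumes c_nonneg: "\<forall>a. 0 \<le> c a"
    and K_fin: "finite K"
    and od_distinct: "\<forall>k\<in>K. orig k \<noteq> dest k"
    and tollfree_path: "\<forall>k\<in>K. (orig k, dest k) \<in> (tollfree_step tail head tol)\<^sup>*"
begin

lemma commodity: "k \<in> K \<Longrightarrow> single_commodity tail head c tol (orig k) (dest k)"
  using c_nonneg od_distinct tollfree_path by unfold_locales auto

abbreviation "commodity_flows k \<equiv> bounded_flows tail head (orig k) (dest k)"

definition load_costs :: "((real^'n) \<times> real) set" where
  "load_costs = {\<Sum>k\<in>K. load_cost c tol (y k) | y. \<forall>k\<in>K. y k \<in> commodity_flows k}"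

lemma compact_load_costs: "compact load_costs"
proof -
  have "compact (load_cost c tol ` commodity_flows k)" for k
    using linear_load_cost compact_bounded_flows
    by (intro compact_continuous_image linear_continuous_on) (simp_all add: linear_conv_bounded_linear)
  then show ?thesis
    unfolding load_costs_def sum_sets_image[where g = "load_cost c tol"] using K_fin
    by (intro compact_sum_sets) auto
qed

lemma convex_load_costs: "convex load_costs"
proof -
  have "convex (load_cost c tol ` commodity_flows k)" for k
    using linear_load_cost convex_bounded_flows by (rule convex_linear_image)
  then show ?thesis
    unfolding load_costs_def sum_sets_image[where g = "load_cost c tol"] using K_fin
    by (intro convex_sum_sets) auto
qed

lemma tollfree_load_cost: "\<exists>p\<in>load_costs. fst p = 0"
proof -
  have "\<forall>k\<in>K. \<exists>y\<in>commodity_flows k. \<forall>i. y $ tol i = 0"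
    using single_commodity.tollfree_bounded_flow[OF commodity] by blast
  from bchoice[OF this[unfolded Bex_def]] obtain y
    where y: "\<forall>k\<in>K. y k \<in> commodity_flows k \<and> (\<forall>i. y k $ tol i = 0)"
    by blast
  then have "fst (load_cost c tol (y k)) = 0" if "k \<in> K" for k
    using that by (simp add: load_cost_def vec_eq_iff)
  then have "fst (\<Sum>k\<in>K. load_cost c tol (y k)) = 0"
    by (simp add: fst_sum)
  moreover have "(\<Sum>k\<in>K. load_cost c tol (y k)) \<in> load_costs"
    using y unfolding load_costs_def by blast
  ultimately show ?thesis
    by blast
qed

lemma sum_fk_attained:
  assumes "0 \<le> t"
  shows "\<exists>p\<in>load_costs. (\<Sum>k\<in>K. fk tail head c tol (orig k) (dest k) t) = ereal (t \<bullet> fst p + snd p)"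
proof -
  have "\<forall>k\<in>K. \<exists>y\<in>commodity_flows k. fk tail head c tol (orig k) (dest k) t = ereal (cost c tol t (vec_nth y))"
    using single_commodity.fk_attained[OF commodity assms] by blast
  from bchoice[OF this[unfolded Bex_def]] obtain y
    where y: "\<forall>k\<in>K. y k \<in> commodity_flows k \<and> fk tail head c tol (orig k) (dest k) t = ereal (cost c tol t (vec_nth (y k)))"
    by blast
  then have "(\<Sum>k\<in>K. fk tail head c tol (orig k) (dest k) t) = (\<Sum>k\<in>K. ereal (cost c tol t (vec_nth (y k))))"
    by (intro sum.cong) auto
  also have "\<dots> = ereal (t \<bullet> fst (\<Sum>k\<in>K. load_cost c tol (y k)) + snd (\<Sum>k\<in>K. load_cost c tol (y k)))"
    by (simp add: cost_eq_load_cost fst_sum snd_sum inner_sum_right sum.distrib)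
  finally have "(\<Sum>k\<in>K. fk tail head c tol (orig k) (dest k) t)
      = ereal (t \<bullet> fst (\<Sum>k\<in>K. load_cost c tol (y k)) + snd (\<Sum>k\<in>K. load_cost c tol (y k)))" .
  moreover have "(\<Sum>k\<in>K. load_cost c tol (y k)) \<in> load_costs"
    using y unfolding load_costs_def by blast
  ultimately show ?thesis
    by blast
qed

text \<open>Strong duality. Lagrangian duality on the compact convex set of (tolled-arc load, cost)
  pairs yields tolls t for which f(t) - t\<bullet>w exceeds any bound below the capacitated
  minimum.\<close>
lemma capacitated_load_cost_le_gtot:
  assumes w: "0 \<le> w"
  shows "\<exists>p\<in>load_costs. fst p \<le> w \<and> ereal (snd p) \<le> gtot tail head c tol K orig dest w"
proof -
  define W where "W = {p :: (real^'n) \<times> real. fst p \<le> w}"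
  have "W = {..w} \<times> UNIV"
    unfolding W_def by auto
  then have "compact (load_costs \<inter> W)"
    using compact_load_costs by (simp add: closed_Times compact_Int_closed)
  moreover have "load_costs \<inter> W \<noteq> {}"
    using tollfree_load_cost w unfolding W_def by auto
  moreover have "continuous_on (load_costs \<inter> W) snd"
    by (intro continuous_intros)
  ultimately obtain ps where ps: "ps \<in> load_costs" "fst ps \<le> w"
    and ps_min: "\<forall>p\<in>load_costs. fst p \<le> w \<longrightarrow> snd ps \<le> snd p"
    unfolding W_def by (blast dest: continuous_attains_inf)
  have "ereal (snd ps) \<le> gtot tail head c tol K orig dest w"
  proof (rule ccontr)
    assume "\<not> ereal (snd ps) \<le> gtot tail head c tol K orig dest w"
    then have "gtot tail head c tol K orig dest w < ereal (snd ps)"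
      by simp
    then obtain \<gamma> where \<gamma>: "gtot tail head c tol K orig dest w < ereal \<gamma>" "\<gamma> < snd ps"
      using ereal_dense2 by force
    obtain t where t: "0 \<le> t" and t_sep: "\<forall>p\<in>load_costs. t \<bullet> w + \<gamma> < t \<bullet> fst p + snd p"
      using compact_convex_lagrange_duality[OF compact_load_costs convex_load_costs ps ps_min \<gamma>(2)]
      by blast
    obtain p where "p \<in> load_costs"
      and ft: "(\<Sum>k\<in>K. fk tail head c tol (orig k) (dest k) t) = ereal (t \<bullet> fst p + snd p)"
      using sum_fk_attained[OF t] by blast
    then have "ereal \<gamma> < (\<Sum>k\<in>K. fk tail head c tol (orig k) (dest k) t) - ereal (t \<bullet> w)"
      using t_sep by fastforce
    also have "\<dots> \<le> gtot tail head c tol K orig dest w"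
      unfolding gtot_eq_conjugate by (rule conjugate_ge)
    finally show False
      using \<gamma>(1) by simp
  qed
  with ps show ?thesis
    by blast
qed

lemma bilevel_feasible_decomposition_of_load_cost:
  assumes K_ne: "K \<noteq> {}" and p: "p \<in> load_costs" and cap: "fst p \<le> w"
    and cost: "ereal (snd p) \<le> gtot tail head c tol K orig dest w"
  shows "\<exists>wk. bilevel_feasible_decomposition tail head c tol K orig dest w wk"
proof -
  obtain y where y: "\<forall>k\<in>K. y k \<in> commodity_flows k" and p_eq: "p = (\<Sum>k\<in>K. load_cost c tol (y k))"
    using p unfolding load_costs_def by blast
  obtain k0 where k0: "k0 \<in> K"
    using K_ne by blast
  define slack where "slack = w - fst p"
  define wk where "wk k = fst (load_cost c tol (y k)) + (if k = k0 then slack else 0)" for k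
  have slack_nonneg: "0 \<le> slack $ i" for i
    using cap unfolding slack_def by (simp add: less_eq_vec_def)
  have y_nonneg: "0 \<le> y k $ a" if "k \<in> K" for k a
    using y that by (simp add: bounded_flows_iff flows_def)
  have wk_nonneg: "\<forall>k\<in>K. \<forall>i. 0 \<le> wk k $ i"
    using y_nonneg slack_nonneg by (simp add: wk_def load_cost_def)
  have "(\<Sum>k\<in>K. wk k) = fst p + slack"
    using K_fin k0 by (simp add: wk_def sum.distrib fst_sum p_eq)
  then have wk_sum: "(\<Sum>k\<in>K. wk k) = w"
    by (simp add: slack_def)
  have "gtot tail head c tol K orig dest w = (\<Sum>k\<in>K. gk tail head c tol (orig k) (dest k) (wk k))"
  proof (rule antisym)
    have "gtot tail head c tol K orig dest w
        = conjugate (\<lambda>t. \<Sum>k\<in>K. fk tail head c tol (orig k) (dest k) t) (\<Sum>k\<in>K. wk k)"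
      by (simp add: wk_sum gtot_eq_conjugate)
    also have "\<dots> \<le> (\<Sum>k\<in>K. conjugate (fk tail head c tol (orig k) (dest k)) (wk k))"
      by (rule conjugate_sum_le)
    finally show "gtot tail head c tol K orig dest w \<le> (\<Sum>k\<in>K. gk tail head c tol (orig k) (dest k) (wk k))"
      by (simp only: gk_eq_conjugate)
    have "gk tail head c tol (orig k) (dest k) (wk k) \<le> ereal (snd (load_cost c tol (y k)))"
      if k: "k \<in> K" for k
    proof -
      have "y k $ tol i \<le> wk k $ i" for i
        using slack_nonneg by (simp add: wk_def load_cost_def)
      then show ?thesis
        using single_commodity.gk_le_cost[OF commodity[OF k], of "vec_nth (y k)"] y k
        by (simp add: bounded_flows_iff load_cost_def)
    qed
    then have "(\<Sum>k\<in>K. gk tail head c tol (orig k) (dest k) (wk k)) \<le> ereal (snd p)"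
      by (simp add: p_eq snd_sum sum_mono flip: sum_ereal)
    with cost show "(\<Sum>k\<in>K. gk tail head c tol (orig k) (dest k) (wk k)) \<le> gtot tail head c tol K orig dest w"
      by (rule order_trans[rotated])
  qed
  with wk_nonneg wk_sum show ?thesis
    unfolding bilevel_feasible_decomposition_def is_decomposition_def by (intro exI[of _ wk]) simp
qed

lemma bilevel_feasible_decomposition_exists:
  assumes w: "0 \<le> w" and finite_value: "gtot tail head c tol K orig dest w \<noteq> \<infinity>"
  shows "\<exists>wk. bilevel_feasible_decomposition tail head c tol K orig dest w wk"
proof (cases "K = {}")
  case True
  then have "w = 0"
    using finite_value by (simp add: gtot_eq_conjugate conjugate_zero split: if_splits)
  with True have "bilevel_feasible_decomposition tail head c tol K orig dest w (\<lambda>k. 0)"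
    by (simp add: bilevel_feasible_decomposition_def is_decomposition_def gtot_eq_conjugate
        conjugate_zero)
  then show ?thesis
    by (rule exI[of _ "\<lambda>k. 0"])
next
  case False
  with capacitated_load_cost_le_gtot[OF w] show ?thesis
    using bilevel_feasible_decomposition_of_load_cost by blast
qed

lemma bilevel_feasible_decomposition_unique:
  assumes ext: "(w, \<mu>) extreme_point_of epigraph (gtot tail head c tol K orig dest)"
    and u: "bilevel_feasible_decomposition tail head c tol K orig dest w u"
    and v: "bilevel_feasible_decomposition tail head c tol K orig dest w v"
    and k: "k \<in> K"
  shows "u k = v k"
proof -
  let ?f = "\<lambda>k. fk tail head c tol (orig k) (dest k)"
  have "\<forall>k\<in>K. \<forall>x. conjugate (?f k) x \<noteq> -\<infinity>"
    using single_commodity.gk_nonneg[OF commodity] unfolding gk_eq_conjugate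
    by (metis not_MInfty_nonneg)
  moreover have "(w, \<mu>) extreme_point_of epigraph (conjugate (\<lambda>t. \<Sum>k\<in>K. ?f k t))"
    using ext by (simp add: gtot_eq_conjugate)
  moreover have "(\<Sum>k\<in>K. u k) = w" "conjugate (\<lambda>t. \<Sum>k\<in>K. ?f k t) w = (\<Sum>k\<in>K. conjugate (?f k) (u k))"
    using u unfolding bilevel_feasible_decomposition_def is_decomposition_def gtot_eq_conjugate gk_eq_conjugate
    by auto
  moreover have "(\<Sum>k\<in>K. v k) = w" "conjugate (\<lambda>t. \<Sum>k\<in>K. ?f k t) w = (\<Sum>k\<in>K. conjugate (?f k) (v k))"
    using v unfolding bilevel_feasible_decomposition_def is_decomposition_def gtot_eq_conjugate gk_eq_conjugate
    by auto
  ultimately show ?thesis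
    by (rule extreme_point_conjugate_sum_unique_split[OF K_fin k])
qed

end

theorem lemma7:
  fixes tail head :: "'e::finite \<Rightarrow> 'v::finite"
    and c :: "'e \<Rightarrow> real"
    and tol :: "'n::finite \<Rightarrow> 'e"
    and K :: "'k set" and orig dest :: "'k \<Rightarrow> 'v"
    and w :: "real^'n"
  assumes c_nonneg: "\<forall>a. 0 \<le> c a"
    and tol_inj: "inj tol"
    and tol_proper: "range tol \<noteq> UNIV"
    and K_fin: "finite K"
    and od_distinct: "\<forall>k\<in>K. orig k \<noteq> dest k"
    and tollfree_path: "\<forall>k\<in>K. (orig k, dest k) \<in> (tollfree_step tail head tol)\<^sup>*"
    and w_nonneg: "\<forall>i. 0 \<le> w $ i"
    and sbf: "strongly_bilevel_feasible tail head c tol K orig dest w"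
  shows "\<exists>wk. bilevel_feasible_decomposition tail head c tol K orig dest w wk \<and>
           (\<forall>wk'. bilevel_feasible_decomposition tail head c tol K orig dest w wk' \<longrightarrow>
                  (\<forall>k\<in>K. wk' k = wk k))"
proof -
  interpret multi_commodity tail head c tol K orig dest
    using c_nonneg K_fin od_distinct tollfree_path by unfold_locales
  obtain F where F: "F face_of epigraph (gtot tail head c tol K orig dest)" "fst ` F = {w}"
      "(0, 1) \<notin> aff_direction F"
    using sbf unfolding strongly_bilevel_feasible_def by blast
  obtain \<mu> where "F = {(w, \<mu>)}"
    using singleton_if_vertical_notin_aff_direction[OF F(2,3)] by blast
  with F(1) have ext: "(w, \<mu>) extreme_point_of epigraph (gtot tail head c tol K orig dest)"
    by (simp add: face_of_singleton)
  then have "gtot tail head c tol K orig dest w \<noteq> \<infinity>"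
    by (simp add: extreme_point_of_epigraph_eq)
  moreover have "0 \<le> w"
    using w_nonneg by (simp add: less_eq_vec_def)
  ultimately obtain wk where wk: "bilevel_feasible_decomposition tail head c tol K orig dest w wk"
    using bilevel_feasible_decomposition_exists by blast
  moreover have "\<forall>k\<in>K. wk' k = wk k"
    if "bilevel_feasible_decomposition tail head c tol K orig dest w wk'" for wk'
    using bilevel_feasible_decomposition_unique[OF ext that wk] by blast
  ultimately show ?thesis
    by blast
qed

end
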